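(* For every preference profile $P$, every Pareto-optimal assignment belongs to the top cycle, i.e. $\mathit{PO}(P)\subseteq \mathit{TC}(P)$.
   Context: Let $N=\{1,\dots,n\}$ be agents and $H$ a set of $n$ houses. A profile $P=(\succ_1,\dots,\succ_n)$ gives each agent a strict linear order on $H$. An assignment is a bijection $\mu:N\to H$; $M$ is the set of all assignments. Agent $x$ weakly prefers $\mu$ to $\lambda$ if $\mu(x)\succ_x\lambda(x)$ or $\mu(x)=\lambda(x)$, strictly if $\mu(x)\succ_x\lambda(x)$. $N_{\mu,\lambda}$ is the set of agents weakly preferring $\mu$ to $\lambda$; $\mu\succsim\lambda$ if $|N_{\mu,\lambda}|\ge|N_{\lambda,\mu}|$, and $\succsim^*$ is the transitive closure of $\succsim$. The top cycle is $\mathit{TC}(P)=\{\mu\in M:\mu\succsim^*\lambda\text{ for all }\lambda\in M\}$. $\mu$ Pareto-dominates $\lambda$ if all agents weakly prefer $\mu$ to $\lambda$ and some agent strictly; $\mathit{PO}(P)$ is the set of assignments not Pareto-dominated by any assignment. *)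

theory Defs
  imports Main "HOL-Library.FuncSet"
begin

text \<open>Agents N and houses H are finite sets of equal cardinality.
  A profile assigns to each agent x a strict preference relation P x on houses,
  where P x h h' means h is strictly preferred to h' by x.\<close>

definition strict_linear_order_on :: "'h set \<Rightarrow> ('h \<Rightarrow> 'h \<Rightarrow> bool) \<Rightarrow> bool" where
  "strict_linear_order_on H R \<longleftrightarrow>
     (\<forall>a\<in>H. \<not> R a a) \<and>
     (\<forall>a\<in>H. \<forall>b\<in>H. \<forall>c\<in>H. R a b \<longrightarrow> R b c \<longrightarrow> R a c) \<and>
     (\<forall>a\<in>H. \<forall>b\<in>H. a \<noteq> b \<longrightarrow> R a b \<or> R b a)"

definition profile :: "'a set \<Rightarrow> 'h set \<Rightarrow> ('a \<Rightarrow> 'h \<Rightarrow> 'h \<Rightarrow> bool) \<Rightarrow> bool" where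
  "profile N H P \<longleftrightarrow> (\<forall>x\<in>N. strict_linear_order_on H (P x))"

definition assignments :: "'a set \<Rightarrow> 'h set \<Rightarrow> ('a \<Rightarrow> 'h) set" where
  "assignments N H = {\<mu>. bij_betw \<mu> N H \<and> \<mu> \<in> extensional N}"

definition weakly_prefers :: "('a \<Rightarrow> 'h \<Rightarrow> 'h \<Rightarrow> bool) \<Rightarrow> 'a \<Rightarrow> ('a \<Rightarrow> 'h) \<Rightarrow> ('a \<Rightarrow> 'h) \<Rightarrow> bool" where
  "weakly_prefers P x \<mu> \<nu> \<longleftrightarrow> P x (\<mu> x) (\<nu> x) \<or> \<mu> x = \<nu> x"

definition strictly_prefers :: "('a \<Rightarrow> 'h \<Rightarrow> 'h \<Rightarrow> bool) \<Rightarrow> 'a \<Rightarrow> ('a \<Rightarrow> 'h) \<Rightarrow> ('a \<Rightarrow> 'h) \<Rightarrow> bool" where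
  "strictly_prefers P x \<mu> \<nu> \<longleftrightarrow> P x (\<mu> x) (\<nu> x)"

definition weak_supporters :: "'a set \<Rightarrow> ('a \<Rightarrow> 'h \<Rightarrow> 'h \<Rightarrow> bool) \<Rightarrow> ('a \<Rightarrow> 'h) \<Rightarrow> ('a \<Rightarrow> 'h) \<Rightarrow> 'a set" where
  "weak_supporters N P \<mu> \<nu> = {x\<in>N. weakly_prefers P x \<mu> \<nu>}"

definition maj :: "'a set \<Rightarrow> 'h set \<Rightarrow> ('a \<Rightarrow> 'h \<Rightarrow> 'h \<Rightarrow> bool) \<Rightarrow> (('a \<Rightarrow> 'h) \<times> ('a \<Rightarrow> 'h)) set" where
  "maj N H P = {(\<mu>, \<nu>). \<mu> \<in> assignments N H \<and> \<nu> \<in> assignments N H \<and>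
       card (weak_supporters N P \<mu> \<nu>) \<ge> card (weak_supporters N P \<nu> \<mu>)}"

definition top_cycle :: "'a set \<Rightarrow> 'h set \<Rightarrow> ('a \<Rightarrow> 'h \<Rightarrow> 'h \<Rightarrow> bool) \<Rightarrow> ('a \<Rightarrow> 'h) set" where
  "top_cycle N H P = {\<mu> \<in> assignments N H. \<forall>\<nu> \<in> assignments N H. (\<mu>, \<nu>) \<in> (maj N H P)\<^sup>+}"

definition pareto_dominates :: "'a set \<Rightarrow> ('a \<Rightarrow> 'h \<Rightarrow> 'h \<Rightarrow> bool) \<Rightarrow> ('a \<Rightarrow> 'h) \<Rightarrow> ('a \<Rightarrow> 'h) \<Rightarrow> bool" where
  "pareto_dominates N P \<mu> \<nu> \<longleftrightarrow>
     (\<forall>x\<in>N. weakly_prefers P x \<mu> \<nu>) \<and> (\<exists>x\<in>N. strictly_prefers P x \<mu> \<nu>)"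

definition pareto_optimal :: "'a set \<Rightarrow> 'h set \<Rightarrow> ('a \<Rightarrow> 'h \<Rightarrow> 'h \<Rightarrow> bool) \<Rightarrow> ('a \<Rightarrow> 'h) set" where
  "pareto_optimal N H P = {\<mu> \<in> assignments N H. \<not> (\<exists>\<nu> \<in> assignments N H. pareto_dominates N P \<nu> \<mu>)}"

end

theory Submission
  imports Defs "HOL-Combinatorics.Transposition"
begin

text \<open>Let \<mu> be Pareto optimal and \<sigma> any other assignment. Some agent x must strictly prefer
  \<mu>(x) to \<sigma>(x), for otherwise \<sigma> would Pareto-dominate \<mu>. Swapping the houses of x and of the
  agent y holding \<mu>(x) under \<sigma> gives an assignment \<tau> with \<tau> \<succsim> \<sigma>: x strictly gains, y is the
  only agent who can lose, and nobody else is affected. Since \<tau> agrees with \<mu> on x and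
  wherever \<sigma> did, induction on the number of agents on which \<sigma> and \<mu> differ connects \<mu>
  to \<sigma> by a chain of majority comparisons.\<close>

lemma strict_linear_order_on_asym:
  assumes "strict_linear_order_on H R" and "a \<in> H" and "b \<in> H" and "R a b"
  shows "\<not> R b a" and "a \<noteq> b"
  using assms unfolding strict_linear_order_on_def by blast+

lemma assignments_in_range:
  "\<mu> \<in> assignments N H \<Longrightarrow> x \<in> N \<Longrightarrow> \<mu> x \<in> H"
  by (auto simp: assignments_def bij_betw_def)

lemma assignments_inj_on:
  "\<mu> \<in> assignments N H \<Longrightarrow> inj_on \<mu> N"
  by (simp add: assignments_def bij_betw_def)

lemma assignments_neq_witness:
  assumes "\<mu> \<in> assignments N H" and "\<sigma> \<in> assignments N H" and "\<sigma> \<noteq> \<mu>"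
  obtains x where "x \<in> N" and "\<sigma> x \<noteq> \<mu> x"
  using assms extensionalityI[of \<sigma> N \<mu>] by (auto simp: assignments_def)

lemma assignments_comp_transpose:
  assumes "\<sigma> \<in> assignments N H" and "x \<in> N" and "y \<in> N"
  shows "\<sigma> \<circ> transpose x y \<in> assignments N H"
proof -
  have "bij_betw (\<sigma> \<circ> transpose x y) N H"
    using assms bij_betw_trans[of "transpose x y" N N \<sigma> H] by (simp add: assignments_def)
  moreover have "\<sigma> \<circ> transpose x y \<in> extensional N"
    using assms by (auto simp: assignments_def extensional_def transpose_def)
  ultimately show ?thesis by (simp add: assignments_def)
qed

lemma maj_refl: "\<mu> \<in> assignments N H \<Longrightarrow> (\<mu>, \<mu>) \<in> maj N H P"
  by (simp add: maj_def)

lemma pareto_optimal_strictly_prefers_over: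
  assumes "profile N H P" and "\<mu> \<in> pareto_optimal N H P"
    and "\<sigma> \<in> assignments N H" and "\<sigma> \<noteq> \<mu>"
  obtains x where "x \<in> N" and "P x (\<mu> x) (\<sigma> x)"
proof -
  have \<mu>: "\<mu> \<in> assignments N H" and undominated: "\<not> pareto_dominates N P \<sigma> \<mu>"
    using assms(2,3) by (auto simp: pareto_optimal_def)
  obtain x0 where x0: "x0 \<in> N" "\<sigma> x0 \<noteq> \<mu> x0"
    using assignments_neq_witness[OF \<mu> assms(3,4)] .
  have total: "P x (\<sigma> x) (\<mu> x) \<or> P x (\<mu> x) (\<sigma> x)" if "x \<in> N" "\<sigma> x \<noteq> \<mu> x" for x
    using that assms(1) assignments_in_range[OF \<mu>] assignments_in_range[OF assms(3)]
    unfolding profile_def strict_linear_order_on_def by blast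
  have "\<exists>x\<in>N. P x (\<mu> x) (\<sigma> x)"
  proof (rule ccontr)
    assume "\<not> ?thesis"
    with total x0 have "pareto_dominates N P \<sigma> \<mu>"
      by (auto simp: pareto_dominates_def weakly_prefers_def strictly_prefers_def)
    with undominated show False ..
  qed
  with that show thesis by blast
qed

lemma card_weak_supporters_transpose_le:
  assumes "finite N" and "x \<in> N" and "y \<in> N"
    and "strict_linear_order_on H (P x)" and "\<sigma> x \<in> H" and "\<sigma> y \<in> H"
    and gain: "P x (\<sigma> y) (\<sigma> x)"
  shows "card (weak_supporters N P \<sigma> (\<sigma> \<circ> transpose x y))
           \<le> card (weak_supporters N P (\<sigma> \<circ> transpose x y) \<sigma>)"
proof -
  let ?\<tau> = "\<sigma> \<circ> transpose x y"
  let ?A = "weak_supporters N P ?\<tau> \<sigma>" and ?B = "weak_supporters N P \<sigma> ?\<tau>"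
  have no_loss: "\<not> P x (\<sigma> x) (\<sigma> y)" and "\<sigma> y \<noteq> \<sigma> x"
    using strict_linear_order_on_asym[OF assms(4,6,5) gain] by auto
  then have "x \<noteq> y" by auto
  have finA: "finite ?A" using assms(1) by (simp add: weak_supporters_def)
  have x_in_A: "x \<in> ?A"
    using \<open>x \<in> N\<close> gain by (simp add: weak_supporters_def weakly_prefers_def)
  have "?B \<subseteq> insert y (?A - {x})"
    using no_loss \<open>\<sigma> y \<noteq> \<sigma> x\<close> \<open>x \<noteq> y\<close>
    by (auto simp: weak_supporters_def weakly_prefers_def transpose_def)
  then have "card ?B \<le> card (insert y (?A - {x}))"
    using finA by (intro card_mono) auto
  also have "\<dots> \<le> Suc (card (?A - {x}))"
    using finA by (simp add: card_insert_if)
  also have "\<dots> = card ?A"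
    using finA x_in_A by (rule card_Suc_Diff1)
  finally show ?thesis .
qed

lemma pareto_optimal_maj_trancl:
  assumes "finite N" and "profile N H P" and \<mu>: "\<mu> \<in> pareto_optimal N H P"
    and "\<sigma> \<in> assignments N H"
  shows "(\<mu>, \<sigma>) \<in> (maj N H P)\<^sup>+"
  using assms(4)
proof (induction "card {z \<in> N. \<sigma> z \<noteq> \<mu> z}" arbitrary: \<sigma> rule: less_induct)
  case less
  have \<mu>_assign: "\<mu> \<in> assignments N H" using \<mu> by (simp add: pareto_optimal_def)
  show ?case
  proof (cases "\<sigma> = \<mu>")
    case True
    with \<mu>_assign show ?thesis by (auto intro: maj_refl)
  next
    case False
    obtain x where "x \<in> N" and gain: "P x (\<mu> x) (\<sigma> x)"
      using pareto_optimal_strictly_prefers_over[OF assms(2) \<mu> less.prems False] .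
    have order_x: "strict_linear_order_on H (P x)"
      using assms(2) \<open>x \<in> N\<close> by (simp add: profile_def)
    have "\<mu> x \<in> H" using assignments_in_range[OF \<mu>_assign \<open>x \<in> N\<close>] .
    then obtain y where "y \<in> N" and "\<sigma> y = \<mu> x"
      using less.prems by (auto simp: assignments_def bij_betw_def)
    have "\<sigma> x \<in> H" using assignments_in_range[OF less.prems \<open>x \<in> N\<close>] .
    have "\<sigma> x \<noteq> \<mu> x"
      using strict_linear_order_on_asym(2)[OF order_x \<open>\<mu> x \<in> H\<close> \<open>\<sigma> x \<in> H\<close> gain] by simp
    then have "x \<noteq> y" using \<open>\<sigma> y = \<mu> x\<close> by auto
    define \<tau> where "\<tau> = \<sigma> \<circ> transpose x y"
    have \<tau>: "\<tau> \<in> assignments N H"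
      unfolding \<tau>_def using assignments_comp_transpose[OF less.prems \<open>x \<in> N\<close> \<open>y \<in> N\<close>] .
    have "\<mu> y \<noteq> \<mu> x"
      using assignments_inj_on[OF \<mu>_assign] \<open>x \<noteq> y\<close> \<open>x \<in> N\<close> \<open>y \<in> N\<close> by (auto dest: inj_onD)
    then have "{z \<in> N. \<tau> z \<noteq> \<mu> z} \<subseteq> {z \<in> N. \<sigma> z \<noteq> \<mu> z} - {x}"
      using \<open>\<sigma> y = \<mu> x\<close> \<open>x \<noteq> y\<close> by (auto simp: \<tau>_def transpose_def)
    then have "card {z \<in> N. \<tau> z \<noteq> \<mu> z} \<le> card ({z \<in> N. \<sigma> z \<noteq> \<mu> z} - {x})"
      using assms(1) by (intro card_mono) auto
    also have "\<dots> < card {z \<in> N. \<sigma> z \<noteq> \<mu> z}"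
      using assms(1) \<open>x \<in> N\<close> \<open>\<sigma> x \<noteq> \<mu> x\<close> by (intro card_Diff1_less) auto
    finally have "card {z \<in> N. \<tau> z \<noteq> \<mu> z} < card {z \<in> N. \<sigma> z \<noteq> \<mu> z}" .
    then have "(\<mu>, \<tau>) \<in> (maj N H P)\<^sup>+"
      using less.hyps \<tau> by blast
    moreover have "(\<tau>, \<sigma>) \<in> maj N H P"
      using card_weak_supporters_transpose_le[of N x y H P \<sigma>, OF assms(1) \<open>x \<in> N\<close> \<open>y \<in> N\<close> order_x
          \<open>\<sigma> x \<in> H\<close>] gain \<open>\<mu> x \<in> H\<close> \<open>\<sigma> y = \<mu> x\<close> \<tau> less.prems
      by (simp add: maj_def \<tau>_def)
    ultimately show ?thesis ..
  qed
qed

theorem proposition4p3: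
  fixes N :: "'a set" and H :: "'h set" and P :: "'a \<Rightarrow> 'h \<Rightarrow> 'h \<Rightarrow> bool"
  assumes "finite N" and "finite H" and "card N = card H"
    and "profile N H P"
  shows "pareto_optimal N H P \<subseteq> top_cycle N H P"
  using pareto_optimal_maj_trancl[OF assms(1,4)]
  by (auto simp: top_cycle_def pareto_optimal_def)

end
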